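(* For integers $m\ge1$, $n\ge2$ and real $\alpha\notin\pi\mathbb{Z}$, $$\sum_{k=0}^{n-1}\cot^m\frac{\alpha+k\pi}{n}=(-1)^{m/2}\,n\,\mathbb{1}_{m\text{ even}}+\frac{(-i)^m}{(m-1)!}\sum_{\nu\in\mathcal{P}^{\mathrm{odd}}(m)}P_{|\nu|-1}(\cot\alpha)\,(in)^{|\nu|}\,\mu(\hat0_m,\nu).$$
   Context: The derivative polynomials $P_k$ are defined by $P_0(x)=x$, $P_{k+1}(x)=(1+x^2)P_k'(x)$; equivalently $\frac{d^k}{dz^k}\tan z=P_k(\tan z)$ (and $\frac{d^k}{dz^k}\cot z=(-1)^kP_k(\cot z)$). $\mathcal{P}^{\mathrm{odd}}(m)$ is the set of set partitions of $\{1,\dots,m\}$ all of whose blocks have odd cardinality; $|\nu|$ is the number of blocks of $\nu$; and $\mu(\hat0_m,\nu)=\prod_{B\in\nu}(-1)^{|B|-1}(|B|-1)!$ (the Möbius function of the partition lattice). $\mathbb{1}_{m\text{ even}}$ is $1$ if $m$ is even and $0$ otherwise. *)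

theory Defs
  imports Complex_Main "HOL-Library.Disjoint_Sets" "HOL-Computational_Algebra.Polynomial"
begin

fun deriv_poly :: "nat \<Rightarrow> real poly" where
  "deriv_poly 0 = [:0, 1:]"
| "deriv_poly (Suc k) = [:1, 0, 1:] * pderiv (deriv_poly k)"

definition odd_partitions :: "nat \<Rightarrow> nat set set set" where
  "odd_partitions m = {\<nu>. partition_on {1..m} \<nu> \<and> (\<forall>B\<in>\<nu>. odd (card B))}"

text \<open>Moebius function of the partition lattice, mu(0_m, nu).\<close>
definition mobius_part :: "nat set set \<Rightarrow> int" where
  "mobius_part \<nu> = (\<Prod>B\<in>\<nu>. (-1) ^ (card B - 1) * fact (card B - 1))"

end

theory Submission
  imports Defs "HOL-Complex_Analysis.Complex_Analysis"
begin

(* Put theta_k = (alpha + k pi) / n and c_k = cot theta_k.  The power sums of the c_k are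
   Taylor coefficients of g(t) = sum_k c_k / (1 - t c_k): its (m-1)-st derivative at 0 is
   (m-1)! sum_k c_k^m.  Writing t = tan phi, each summand becomes
   cos^2 phi cot (theta_k - phi) - sin phi cos phi, and the multiplication formula
   sum_k cot (x + k pi / n) = n cot (n x) gives the closed form
     g(t) = n (cot (alpha - n arctan t) - t) / (1 + t^2) = - cot (h t) h'(t) - n t / (1 + t^2)
   with h(t) = alpha - n arctan t.  Faa di Bruno's formula expands the derivatives of
   - cot (h t) h'(t) as a sum over set partitions of {1..m}: the outer factor contributes the
   derivative polynomial P_(|nu|-1) (cot alpha), and a block B contributes the |B|-th
   derivative of h at 0, which vanishes unless |B| is odd and otherwise yields the block's
   share of the Moebius weight.  The term - n t / (1 + t^2) contributes n (-1)^(m/2) for even m.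
   The argument runs over complex alpha, where all the functions involved are holomorphic. *)

section \<open>Higher derivatives of simple fractions\<close>

lemma higher_deriv_eq_derivative_chain:
  fixes f :: "complex \<Rightarrow> complex"
  assumes "open S" and "t \<in> S"
    and "\<And>s. s \<in> S \<Longrightarrow> f s = F 0 s"
    and "\<And>j s. s \<in> S \<Longrightarrow> (F j has_field_derivative F (Suc j) s) (at s)"
  shows "(deriv ^^ j) f t = F j t"
  using \<open>t \<in> S\<close>
proof (induction j arbitrary: t)
  case 0
  then show ?case by (simp add: assms(3))
next
  case (Suc j)
  have "((deriv ^^ j) f has_field_derivative F (Suc j) t) (at t)"
    by (rule has_field_derivative_transform_within_open[OF assms(4) \<open>open S\<close>])
       (use Suc in simp_all)
  then show ?case by (simp add: DERIV_imp_deriv)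
qed

lemma has_field_derivative_inverse_linear_power:
  fixes c s :: complex
  assumes "1 - s * c \<noteq> 0"
  shows "((\<lambda>s. inverse (1 - s * c) ^ Suc j) has_field_derivative
          of_nat (Suc j) * c * inverse (1 - s * c) ^ Suc (Suc j)) (at s)"
proof -
  have "((\<lambda>s. inverse (1 - s * c)) has_field_derivative c * inverse (1 - s * c) ^ 2) (at s)"
    using assms by (auto intro!: derivative_eq_intros simp: power2_eq_square)
  from DERIV_power[OF this, of "Suc j"] show ?thesis
    by (simp add: algebra_simps power2_eq_square)
qed

lemma higher_deriv_sum_simple_fractions:
  fixes w c :: "'a \<Rightarrow> complex"
  assumes "finite K" and "\<forall>k\<in>K. 1 - t * c k \<noteq> 0"
  shows "(deriv ^^ j) (\<lambda>s. \<Sum>k\<in>K. w k / (1 - s * c k)) t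
       = fact j * (\<Sum>k\<in>K. w k * c k ^ j / (1 - t * c k) ^ Suc j)"
proof -
  define S where "S = (\<Inter>k\<in>K. {s. 1 - s * c k \<noteq> 0})"
  have "open S"
    unfolding S_def using \<open>finite K\<close>
    by (intro open_INT ballI open_Collect_neq) (auto intro!: continuous_intros)
  have "(deriv ^^ j) (\<lambda>s. \<Sum>k\<in>K. w k / (1 - s * c k)) t
      = (\<Sum>k\<in>K. fact j * w k * c k ^ j * inverse (1 - t * c k) ^ Suc j)"
  proof (rule higher_deriv_eq_derivative_chain[OF \<open>open S\<close>])
    fix j and s :: complex
    assume "s \<in> S"
    then have "1 - s * c k \<noteq> 0" if "k \<in> K" for k
      using that by (auto simp: S_def)
    then show "((\<lambda>s. \<Sum>k\<in>K. fact j * w k * c k ^ j * inverse (1 - s * c k) ^ Suc j)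
        has_field_derivative (\<Sum>k\<in>K. fact (Suc j) * w k * c k ^ Suc j * inverse (1 - s * c k) ^ Suc (Suc j))) (at s)"
      by (intro DERIV_sum DERIV_cmult[OF has_field_derivative_inverse_linear_power, THEN DERIV_cong])
         (auto simp: algebra_simps)
  qed (use assms in \<open>auto simp: S_def divide_inverse\<close>)
  then show ?thesis
    by (simp add: sum_distrib_left divide_inverse power_inverse mult_ac)
qed

lemma higher_deriv_sum_simple_fractions_at_0:
  fixes w c :: "'a \<Rightarrow> complex"
  assumes "finite K"
  shows "(deriv ^^ j) (\<lambda>s. \<Sum>k\<in>K. w k / (1 - s * c k)) 0 = fact j * (\<Sum>k\<in>K. w k * c k ^ j)"
  using higher_deriv_sum_simple_fractions[OF assms, of 0] by simp

section \<open>The arctangent near the origin\<close>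

lemma abs_Im_less_one_in_unit_ball:
  fixes t :: complex
  assumes "t \<in> ball 0 1"
  shows "\<bar>Im t\<bar> < 1"
  using assms abs_Im_le_cmod[of t] by simp

lemma one_plus_square_nonzero_in_unit_ball:
  fixes t :: complex
  assumes "t \<in> ball 0 1"
  shows "1 + t\<^sup>2 \<noteq> 0"
proof
  assume "1 + t\<^sup>2 = 0"
  then have "norm (t\<^sup>2) = 1" by (simp add: add_eq_0_iff)
  moreover have "norm (t\<^sup>2) < 1"
    using assms by (simp add: norm_power power_less_one_iff)
  ultimately show False by simp
qed

lemma eventually_in_unit_ball: "\<forall>\<^sub>F t in nhds (0::complex). t \<in> ball 0 1"
  by (rule eventually_nhds_in_open) auto

lemma Arctan_holomorphic_on_unit_ball: "Arctan holomorphic_on ball 0 1"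
  by (rule holomorphic_on_Arctan) (use abs_Im_less_one_in_unit_ball in blast)

lemma one_plus_square_simple_fractions:
  fixes t :: complex
  assumes "1 + t\<^sup>2 \<noteq> 0"
  shows "inverse (1 + t\<^sup>2) = (\<Sum>c\<in>{\<i>, -\<i>}. (1/2) / (1 - t * c))"
    and "t / (1 + t\<^sup>2) = (\<Sum>c\<in>{\<i>, -\<i>}. inverse (2 * c) / (1 - t * c))"
proof -
  have factor: "1 + t\<^sup>2 = (1 - t * \<i>) * (1 + t * \<i>)"
    by (simp add: algebra_simps power2_eq_square)
  with assms have nz: "1 - t * \<i> \<noteq> 0" "1 + t * \<i> \<noteq> 0"
    by auto
  have "(\<Sum>c\<in>{\<i>, -\<i>}. (1/2) / (1 - t * c)) = (1/2) / (1 - t * \<i>) + (1/2) / (1 + t * \<i>)"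
    by simp
  also have "\<dots> = ((1/2) * (1 + t * \<i>) + (1/2) * (1 - t * \<i>)) / (1 + t\<^sup>2)"
    unfolding factor by (rule add_frac_eq[OF nz])
  also have "(1/2) * (1 + t * \<i>) + (1/2) * (1 - t * \<i>) = 1"
    by (simp add: field_simps)
  finally show "inverse (1 + t\<^sup>2) = (\<Sum>c\<in>{\<i>, -\<i>}. (1/2) / (1 - t * c))"
    by (simp add: inverse_eq_divide)
  have "(\<Sum>c\<in>{\<i>, -\<i>}. inverse (2 * c) / (1 - t * c)) = (-\<i>/2) / (1 - t * \<i>) + (\<i>/2) / (1 + t * \<i>)"
    by simp
  also have "\<dots> = ((-\<i>/2) * (1 + t * \<i>) + (\<i>/2) * (1 - t * \<i>)) / (1 + t\<^sup>2)"
    unfolding factor by (rule add_frac_eq[OF nz])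
  also have "(-\<i>/2) * (1 + t * \<i>) + (\<i>/2) * (1 - t * \<i>) = t"
    by (simp add: field_simps)
  finally show "t / (1 + t\<^sup>2) = (\<Sum>c\<in>{\<i>, -\<i>}. inverse (2 * c) / (1 - t * c))"
    by simp
qed

lemma sum_powers_i_minus_i:
  "(\<Sum>c\<in>{\<i>, -\<i>}. (1/2) * c ^ j) = (if even j then (-1) ^ (j div 2) else 0)"
  "(\<Sum>c\<in>{\<i>, -\<i>}. inverse (2 * c) * c ^ j) = (if odd j then (-1) ^ (j div 2) else 0)"
proof -
  obtain q where "j = 2 * q \<or> j = Suc (2 * q)"
    by (metis oddE evenE Suc_eq_plus1)
  moreover have "\<i> ^ (2 * q) = (-1) ^ q" "(-\<i>) ^ (2 * q) = (-1) ^ q"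
    by (simp_all add: power_mult)
  ultimately show "(\<Sum>c\<in>{\<i>, -\<i>}. (1/2) * c ^ j) = (if even j then (-1) ^ (j div 2) else 0)"
    and "(\<Sum>c\<in>{\<i>, -\<i>}. inverse (2 * c) * c ^ j) = (if odd j then (-1) ^ (j div 2) else 0)"
    by (auto simp: field_simps simp del: power_minus)
qed

lemma higher_deriv_Arctan_at_0:
  "(deriv ^^ Suc j) Arctan 0 = fact j * (if even j then (-1) ^ (j div 2) else 0)"
proof -
  have "deriv Arctan t = (\<Sum>c\<in>{\<i>, -\<i>}. (1/2) / (1 - t * c))" if "t \<in> ball 0 1" for t
  proof -
    have "deriv Arctan t = inverse (1 + t\<^sup>2)"
      using abs_Im_less_one_in_unit_ball[OF that] by (intro DERIV_imp_deriv has_field_derivative_Arctan)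
    then show ?thesis
      using one_plus_square_simple_fractions(1) one_plus_square_nonzero_in_unit_ball that
      by simp
  qed
  then have "(deriv ^^ j) (deriv Arctan) 0 = (deriv ^^ j) (\<lambda>t. \<Sum>c\<in>{\<i>, -\<i>}. (1/2) / (1 - t * c)) 0"
    by (intro higher_deriv_cong_ev eventually_mono[OF eventually_in_unit_ball]) auto
  also have "\<dots> = fact j * (if even j then (-1) ^ (j div 2) else 0)"
    by (simp only: higher_deriv_sum_simple_fractions_at_0 finite.intros sum_powers_i_minus_i)
  finally show ?thesis
    by (simp add: funpow_Suc_right del: funpow.simps)
qed

lemma higher_deriv_shifted_Arctan_at_0:
  "(deriv ^^ Suc j) (\<lambda>t. a - of_nat n * Arctan t) 0
     = - of_nat n * fact j * (if even j then (-1) ^ (j div 2) else 0)"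
proof -
  have "(deriv ^^ Suc j) (\<lambda>t. a - of_nat n * Arctan t) 0
      = (deriv ^^ Suc j) (\<lambda>t. a) 0 - (deriv ^^ Suc j) (\<lambda>t. of_nat n * Arctan t) 0"
    by (rule higher_deriv_diff[of _ "ball 0 1"])
       (auto intro!: holomorphic_intros Arctan_holomorphic_on_unit_ball)
  also have "(deriv ^^ Suc j) (\<lambda>t. of_nat n * Arctan t) 0 = of_nat n * (deriv ^^ Suc j) Arctan 0"
    by (rule higher_deriv_cmult[OF Arctan_holomorphic_on_unit_ball]) auto
  finally show ?thesis
    by (simp only: higher_deriv_Arctan_at_0 higher_deriv_const) simp
qed

lemma higher_deriv_div_one_plus_square_at_0:
  "(deriv ^^ j) (\<lambda>t. t / (1 + t\<^sup>2)) 0 = fact j * (if odd j then (-1) ^ (j div 2) else (0::complex))"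
proof -
  have "(deriv ^^ j) (\<lambda>t. t / (1 + t\<^sup>2)) 0
      = (deriv ^^ j) (\<lambda>t. \<Sum>c\<in>{\<i>, -\<i>}. inverse (2 * c) / (1 - t * c)) 0"
    using one_plus_square_simple_fractions(2) one_plus_square_nonzero_in_unit_ball
    by (intro higher_deriv_cong_ev eventually_mono[OF eventually_in_unit_ball]) auto
  also have "\<dots> = fact j * (if odd j then (-1) ^ (j div 2) else 0)"
    by (simp only: higher_deriv_sum_simple_fractions_at_0 finite.intros sum_powers_i_minus_i)
  finally show ?thesis .
qed

section \<open>Derivative polynomials of the cotangent\<close>

lemma has_field_derivative_cot:
  fixes z :: "'a::{real_normed_field,banach}"
  assumes "sin z \<noteq> 0"
  shows "(cot has_field_derivative -(1 + cot z ^ 2)) (at z)"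
proof -
  have "inverse ((sin z)\<^sup>2) = 1 + cot z ^ 2"
    using assms sin_cos_squared_add[of z]
    by (simp add: cot_def field_simps power2_eq_square)
  then show ?thesis
    using DERIV_cot[OF assms] by simp
qed

lemma map_poly_of_real_mult:
  "map_poly of_real (p * q) = map_poly of_real p * (map_poly of_real q :: 'a::real_field poly)"
  by (rule poly_eqI) (simp add: coeff_map_poly coeff_mult)

lemma map_poly_of_real_pderiv:
  "map_poly of_real (pderiv p) = pderiv (map_poly of_real p :: 'a::real_field poly)"
  by (rule poly_eqI) (simp add: coeff_map_poly coeff_pderiv)

lemma poly_map_poly_of_real:
  "poly (map_poly of_real p) (of_real x :: 'a::real_field) = of_real (poly p x)"
  by (induction p) (simp_all add: map_poly_pCons)

lemma map_poly_of_real_deriv_poly_Suc: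
  "map_poly of_real (deriv_poly (Suc k))
     = [:1, 0, 1:] * pderiv (map_poly of_real (deriv_poly k) :: 'a::real_field poly)"
proof -
  have "map_poly of_real [:1, 0, 1::real:] = ([:1, 0, 1:] :: 'a poly)"
    by (simp add: map_poly_pCons)
  then show ?thesis
    by (simp only: deriv_poly.simps map_poly_of_real_mult map_poly_of_real_pderiv)
qed

lemma higher_deriv_cot:
  fixes z :: complex
  assumes "sin z \<noteq> 0"
  shows "(deriv ^^ k) cot z = (-1) ^ k * poly (map_poly of_real (deriv_poly k)) (cot z)"
proof (rule higher_deriv_eq_derivative_chain[where S = "{z. sin z \<noteq> 0}"])
  show "open {z::complex. sin z \<noteq> 0}"
    by (rule open_Collect_neq) (auto intro!: continuous_intros)
  fix j and s :: complex
  assume "s \<in> {z. sin z \<noteq> 0}"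
  then show "((\<lambda>z. (-1) ^ j * poly (map_poly of_real (deriv_poly j)) (cot z)) has_field_derivative
      (-1) ^ Suc j * poly (map_poly of_real (deriv_poly (Suc j))) (cot s)) (at s)"
    unfolding map_poly_of_real_deriv_poly_Suc
    by (auto intro!: derivative_eq_intros has_field_derivative_cot simp: algebra_simps power2_eq_square)
qed (use assms in \<open>auto simp: map_poly_pCons\<close>)

lemma higher_deriv_neg_cot:
  fixes a :: complex
  assumes "sin a \<noteq> 0"
  shows "(deriv ^^ k) (\<lambda>y. - cot y) a = - ((-1) ^ k * poly (map_poly of_real (deriv_poly k)) (cot a))"
proof -
  have "cot holomorphic_on {y :: complex. sin y \<noteq> 0}"
    unfolding cot_def by (intro holomorphic_intros) auto
  moreover have "open {y :: complex. sin y \<noteq> 0}"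
    by (rule open_Collect_neq) (auto intro!: continuous_intros)
  ultimately show ?thesis
    using assms by (simp add: higher_deriv_uminus higher_deriv_cot)
qed

section \<open>Faa di Bruno's formula over set partitions\<close>

lemma partition_on_block:
  assumes "partition_on A \<nu>" and "B \<in> \<nu>"
  shows "B \<subseteq> A" and "B \<noteq> {}" and "disjnt B (\<Union>(\<nu> - {B}))"
    and "partition_on (A - B) (\<nu> - {B})"
proof -
  show disj: "disjnt B (\<Union>(\<nu> - {B}))"
    using assms unfolding partition_on_def disjoint_def disjnt_def by blast
  have "partition_on A (insert B (\<nu> - {B}))"
    using assms by (simp add: insert_absorb)
  then show "B \<subseteq> A" "B \<noteq> {}" "partition_on (A - B) (\<nu> - {B})"
    unfolding partition_on_insert[OF disj] by auto
qed

lemma partition_on_insert_singleton: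
  assumes "partition_on A \<nu>" and "a \<notin> A"
  shows "partition_on (insert a A) (insert {a} \<nu>)"
proof -
  have "disjnt {a} (\<Union>\<nu>)"
    using partition_onD1[OF assms(1)] assms(2) by (simp add: disjnt_def)
  moreover have "insert a A - {a} = A"
    using assms(2) by auto
  ultimately show ?thesis
    using assms(1) by (simp add: partition_on_insert)
qed

lemma partition_on_insert_into_block:
  assumes "partition_on A \<nu>" and "B \<in> \<nu>" and "a \<notin> A"
  shows "partition_on (insert a A) (insert (insert a B) (\<nu> - {B}))"
proof -
  have "\<Union>(\<nu> - {B}) \<subseteq> A"
    using partition_onD1[OF assms(1)] by auto
  then have "disjnt (insert a B) (\<Union>(\<nu> - {B}))"
    using partition_on_block(3)[OF assms(1,2)] assms(3) by (auto simp: disjnt_def)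
  moreover have "insert a A - insert a B = A - B"
    using assms(3) by auto
  ultimately show ?thesis
    using partition_on_block[OF assms(1,2)] by (auto simp: partition_on_insert)
qed

lemma partition_on_insert_cases:
  assumes "partition_on (insert a A) \<mu>" and "a \<notin> A"
  obtains \<nu> where "partition_on A \<nu>" and "\<mu> = insert {a} \<nu>"
  | \<nu> B where "partition_on A \<nu>" and "B \<in> \<nu>" and "\<mu> = insert (insert a B) (\<nu> - {B})"
proof -
  obtain C where C: "C \<in> \<mu>" "a \<in> C"
    using assms(1) by (auto simp: partition_on_def)
  have rest: "partition_on (insert a A - C) (\<mu> - {C})"
    by (rule partition_on_block(4)[OF assms(1) C(1)])
  have \<mu>: "\<mu> = insert C (\<mu> - {C})"
    using C(1) by blast
  show ?thesis
  proof (cases "C = {a}")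
    case True
    then have "insert a A - C = A"
      using assms(2) by auto
    then show ?thesis
      using that(1) rest \<mu> True by simp
  next
    case False
    define B where "B = C - {a}"
    have "B \<noteq> {}" "B \<subseteq> A"
      using False C partition_on_block(1)[OF assms(1) C(1)] by (auto simp: B_def)
    moreover have "disjnt B (\<Union>(\<mu> - {C}))"
      using partition_on_block(3)[OF assms(1) C(1)] by (auto simp: B_def disjnt_def)
    moreover have "A - B = insert a A - C"
      using assms(2) C(2) by (auto simp: B_def)
    ultimately have "partition_on A (insert B (\<mu> - {C}))"
      using rest by (simp add: partition_on_insert)
    moreover have "B \<notin> \<mu> - {C}"
      using \<open>disjnt B (\<Union>(\<mu> - {C}))\<close> \<open>B \<noteq> {}\<close> by (auto simp: disjnt_def)
    then have "\<mu> = insert (insert a B) (insert B (\<mu> - {C}) - {B})"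
      using \<mu> C(2) by (auto simp: B_def)
    ultimately show ?thesis
      using that(2) by blast
  qed
qed

lemma partitions_insert_eq_Un:
  assumes "a \<notin> A"
  shows "{\<mu>. partition_on (insert a A) \<mu>}
       = insert {a} ` {\<nu>. partition_on A \<nu>}
         \<union> (\<lambda>(\<nu>, B). insert (insert a B) (\<nu> - {B})) ` (SIGMA \<nu>:{\<nu>. partition_on A \<nu>}. \<nu>)"
    (is "_ = ?X \<union> ?Y")
proof (intro equalityI subsetI)
  fix \<mu> assume "\<mu> \<in> {\<mu>. partition_on (insert a A) \<mu>}"
  then have "partition_on (insert a A) \<mu>" by simp
  then show "\<mu> \<in> ?X \<union> ?Y"
  proof (rule partition_on_insert_cases[OF _ assms])
    fix \<nu> assume "partition_on A \<nu>" "\<mu> = insert {a} \<nu>"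
    then show ?thesis by simp
  next
    fix \<nu> B assume "partition_on A \<nu>" "B \<in> \<nu>" "\<mu> = insert (insert a B) (\<nu> - {B})"
    then show ?thesis by (intro UnI2 rev_image_eqI[of "(\<nu>, B)"]) simp_all
  qed
next
  fix \<mu> assume "\<mu> \<in> ?X \<union> ?Y"
  then consider \<nu> where "partition_on A \<nu>" "\<mu> = insert {a} \<nu>"
    | \<nu> B where "partition_on A \<nu>" "B \<in> \<nu>" "\<mu> = insert (insert a B) (\<nu> - {B})"
    by blast
  then show "\<mu> \<in> {\<mu>. partition_on (insert a A) \<mu>}"
    by cases (simp_all add: assms partition_on_insert_singleton partition_on_insert_into_block)
qed

lemma partitions_insert_disjoint:
  assumes "a \<notin> A"
  shows "insert {a} ` {\<nu>. partition_on A \<nu>}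
       \<inter> (\<lambda>(\<nu>, B). insert (insert a B) (\<nu> - {B})) ` (SIGMA \<nu>:{\<nu>. partition_on A \<nu>}. \<nu>) = {}"
proof (rule ccontr)
  assume "\<not> ?thesis"
  then obtain \<nu> B \<nu>' where \<nu>: "partition_on A \<nu>" and "B \<in> \<nu>"
    and "insert {a} \<nu>' = insert (insert a B) (\<nu> - {B})"
    by auto
  then have "{a} = insert a B \<or> {a} \<in> \<nu>"
    by auto
  then have "a \<in> \<Union>\<nu>"
    using \<open>B \<in> \<nu>\<close> partition_on_block(2)[OF \<nu> \<open>B \<in> \<nu>\<close>] by blast
  then show False
    using assms partition_onD1[OF \<nu>] by simp
qed

lemma inj_on_insert_singleton_partitions:
  assumes "a \<notin> A"
  shows "inj_on (insert {a}) {\<nu>. partition_on A \<nu>}"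
proof (rule inj_onI)
  fix \<nu>1 \<nu>2 assume "\<nu>1 \<in> {\<nu>. partition_on A \<nu>}" "\<nu>2 \<in> {\<nu>. partition_on A \<nu>}"
    and eq: "insert {a} \<nu>1 = insert {a} \<nu>2"
  then have "{a} \<notin> \<nu>1" "{a} \<notin> \<nu>2"
    using assms partition_onD1[of A \<nu>1] partition_onD1[of A \<nu>2] by blast+
  with eq show "\<nu>1 = \<nu>2"
    by (metis Diff_insert_absorb)
qed

lemma inj_on_insert_into_block:
  assumes "a \<notin> A"
  shows "inj_on (\<lambda>(\<nu>, B). insert (insert a B) (\<nu> - {B})) (SIGMA \<nu>:{\<nu>. partition_on A \<nu>}. \<nu>)"
proof (rule inj_onI, clarsimp)
  fix \<nu>1 B1 \<nu>2 B2
  assume \<nu>B: "partition_on A \<nu>1" "B1 \<in> \<nu>1" "partition_on A \<nu>2" "B2 \<in> \<nu>2"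
    and eq: "insert (insert a B1) (\<nu>1 - {B1}) = insert (insert a B2) (\<nu>2 - {B2})"
  have a_notin: "a \<notin> \<Union>\<nu>1" "a \<notin> \<Union>\<nu>2"
    using assms partition_onD1[OF \<nu>B(1)] partition_onD1[OF \<nu>B(3)] by auto
  have "insert a B1 \<in> insert (insert a B2) (\<nu>2 - {B2})"
    unfolding eq[symmetric] by simp
  moreover have "insert a B1 \<notin> \<nu>2"
    using a_notin by blast
  ultimately have "insert a B1 = insert a B2"
    by blast
  moreover have "a \<notin> B1" "a \<notin> B2"
    using a_notin \<nu>B(2,4) by auto
  ultimately have B: "B1 = B2"
    by (metis Diff_insert_absorb)
  have "\<nu>1 - {B1} = insert (insert a B1) (\<nu>1 - {B1}) - {insert a B1}"
    using a_notin by auto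
  also have "\<dots> = insert (insert a B2) (\<nu>2 - {B2}) - {insert a B2}"
    by (simp only: eq) (simp only: B)
  also have "\<dots> = \<nu>2 - {B2}"
    using a_notin by auto
  finally have "\<nu>1 - {B1} = \<nu>2 - {B2}" .
  then show "\<nu>1 = \<nu>2 \<and> B1 = B2"
    using \<nu>B(2,4) B by blast
qed

lemma sum_partition_on_insert:
  fixes f :: "'a set set \<Rightarrow> 'b::comm_monoid_add"
  assumes "finite A" and "a \<notin> A"
  shows "(\<Sum>\<mu> | partition_on (insert a A) \<mu>. f \<mu>)
       = (\<Sum>\<nu> | partition_on A \<nu>. f (insert {a} \<nu>) + (\<Sum>B\<in>\<nu>. f (insert (insert a B) (\<nu> - {B}))))"
proof -
  define P where "P = {\<nu>. partition_on A \<nu>}"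
  define \<Phi> where "\<Phi> = (\<lambda>(\<nu>, B). insert (insert a B) (\<nu> - {B :: 'a set}))"
  have fin: "finite P" "\<And>\<nu>. \<nu> \<in> P \<Longrightarrow> finite \<nu>"
    using assms(1) by (auto simp: P_def finitely_many_partition_on finite_elements)
  have "(\<Sum>\<mu> | partition_on (insert a A) \<mu>. f \<mu>) = sum f (insert {a} ` P) + sum f (\<Phi> ` Sigma P (\<lambda>\<nu>. \<nu>))"
    unfolding partitions_insert_eq_Un[OF assms(2)] P_def[symmetric] \<Phi>_def[symmetric]
    using fin partitions_insert_disjoint[OF assms(2)]
    by (intro sum.union_disjoint) (auto simp: P_def \<Phi>_def finite_SigmaI)
  also have "sum f (insert {a} ` P) = (\<Sum>\<nu>\<in>P. f (insert {a} \<nu>))"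
    using inj_on_insert_singleton_partitions[OF assms(2)] by (simp add: sum.reindex P_def)
  also have "sum f (\<Phi> ` Sigma P (\<lambda>\<nu>. \<nu>)) = (\<Sum>\<nu>\<in>P. \<Sum>B\<in>\<nu>. f (\<Phi> (\<nu>, B)))"
    using inj_on_insert_into_block[OF assms(2)] fin
    by (simp add: sum.reindex sum.Sigma P_def \<Phi>_def[symmetric])
  finally show ?thesis
    by (simp add: P_def \<Phi>_def sum.distrib)
qed

lemma partitions_of_singleton: "{\<nu>. partition_on {a} \<nu>} = {{{a}}}"
proof -
  have "\<nu> = {{a}}" if "partition_on {a} \<nu>" for \<nu>
  proof -
    have "B = {a}" if "B \<in> \<nu>" for B
      using partition_on_block(1,2)[OF \<open>partition_on {a} \<nu>\<close> that] by auto
    moreover have "\<nu> \<noteq> {}"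
      using that by (auto simp: partition_on_def)
    ultimately show ?thesis by blast
  qed
  then show ?thesis
    by (auto simp: partition_on_space)
qed

lemma sum_card_partition_on:
  assumes "finite A" and "partition_on A \<nu>"
  shows "(\<Sum>B\<in>\<nu>. card B) = card A"
proof -
  have "\<And>B. B \<in> \<nu> \<Longrightarrow> finite B"
    using finite_subset[OF partition_on_block(1)[OF assms(2)] assms(1)] .
  then have "card (\<Union>\<nu>) = (\<Sum>B\<in>\<nu>. card B)"
    using assms(2) finite_elements[OF assms]
    by (intro card_Union_disjoint) (auto simp: partition_on_def)
  then show ?thesis
    using partition_onD1[OF assms(2)] by simp
qed

definition faa_di_bruno_term :: "(complex \<Rightarrow> complex) \<Rightarrow> (complex \<Rightarrow> complex) \<Rightarrow> 'a set set \<Rightarrow> complex \<Rightarrow> complex"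
  where "faa_di_bruno_term G h \<nu> t = (deriv ^^ (card \<nu> - 1)) G (h t) * (\<Prod>B\<in>\<nu>. (deriv ^^ card B) h t)"

lemma has_field_derivative_faa_di_bruno_term:
  assumes "partition_on A \<nu>" and "finite A" and "A \<noteq> {}" and "a \<notin> A"
    and DG: "\<And>k. ((deriv ^^ k) G has_field_derivative (deriv ^^ Suc k) G (h s)) (at (h s))"
    and Dh: "\<And>k. ((deriv ^^ k) h has_field_derivative (deriv ^^ Suc k) h s) (at s)"
  shows "(faa_di_bruno_term G h \<nu> has_field_derivative
           faa_di_bruno_term G h (insert {a} \<nu>) s
           + (\<Sum>B\<in>\<nu>. faa_di_bruno_term G h (insert (insert a B) (\<nu> - {B})) s)) (at s)"
proof -
  have fin: "finite \<nu>"
    using finite_elements[OF assms(2,1)] .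
  moreover have "\<nu> \<noteq> {}"
    using assms(1,3) by (auto simp: partition_on_def)
  ultimately have card: "Suc (card \<nu> - 1) = card \<nu>"
    by (simp add: card_gt_0_iff)
  have blk: "a \<notin> B" "finite B" if "B \<in> \<nu>" for B
    using partition_on_block(1)[OF assms(1) that] assms(2,4) finite_subset by auto
  then have "{a} \<notin> \<nu>"
    by auto
  then have new: "faa_di_bruno_term G h (insert {a} \<nu>) s
      = (deriv ^^ card \<nu>) G (h s) * deriv h s * (\<Prod>B\<in>\<nu>. (deriv ^^ card B) h s)"
    using fin by (simp add: faa_di_bruno_term_def mult.assoc)
  have old: "faa_di_bruno_term G h (insert (insert a B) (\<nu> - {B})) s = (deriv ^^ (card \<nu> - 1)) G (h s) *
      ((deriv ^^ Suc (card B)) h s * (\<Prod>C\<in>\<nu> - {B}. (deriv ^^ card C) h s))" if B: "B \<in> \<nu>" for B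
  proof -
    have "insert a B \<notin> \<nu> - {B}"
      using blk(1) B by auto
    moreover have "card (insert (insert a B) (\<nu> - {B})) = card \<nu>"
      using calculation fin B card by (simp add: card_Diff_singleton)
    ultimately show ?thesis
      using fin blk[OF B] by (simp add: faa_di_bruno_term_def)
  qed
  have "((\<lambda>t. (deriv ^^ (card \<nu> - 1)) G (h t)) has_field_derivative
      (deriv ^^ card \<nu>) G (h s) * deriv h s) (at s)"
    using DERIV_chain2[OF DG Dh[of 0, simplified], of "card \<nu> - 1"] card by simp
  moreover have "((\<lambda>t. \<Prod>B\<in>\<nu>. (deriv ^^ card B) h t) has_field_derivative
      (\<Sum>B\<in>\<nu>. (deriv ^^ Suc (card B)) h s * (\<Prod>C\<in>\<nu> - {B}. (deriv ^^ card C) h s))) (at s)"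
    by (rule has_field_derivative_prod) (rule Dh)
  ultimately have "(faa_di_bruno_term G h \<nu> has_field_derivative
      (deriv ^^ card \<nu>) G (h s) * deriv h s * (\<Prod>B\<in>\<nu>. (deriv ^^ card B) h s)
      + (\<Sum>B\<in>\<nu>. (deriv ^^ Suc (card B)) h s * (\<Prod>C\<in>\<nu> - {B}. (deriv ^^ card C) h s))
        * (deriv ^^ (card \<nu> - 1)) G (h s)) (at s)"
    unfolding faa_di_bruno_term_def[abs_def] by (rule DERIV_mult)
  then show ?thesis
    by (rule DERIV_cong) (simp add: new old sum_distrib_left sum_distrib_right ac_simps)
qed

theorem faa_di_bruno_partitions:
  fixes G h :: "complex \<Rightarrow> complex"
  assumes "open S" and "open T" and "G holomorphic_on T" and "h holomorphic_on S"
    and "h ` S \<subseteq> T" and "t \<in> S"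
  shows "(deriv ^^ m) (\<lambda>t. G (h t) * deriv h t) t =
    (\<Sum>\<nu> | partition_on {1..Suc m} \<nu>. (deriv ^^ (card \<nu> - 1)) G (h t) * (\<Prod>B\<in>\<nu>. (deriv ^^ card B) h t))"
proof -
  have DG: "((deriv ^^ k) G has_field_derivative (deriv ^^ Suc k) G (h s)) (at (h s))" if "s \<in> S" for k s
    using holomorphic_derivI[OF holomorphic_higher_deriv[OF assms(3,2)] assms(2)] that assms(5) by auto
  have Dh: "((deriv ^^ k) h has_field_derivative (deriv ^^ Suc k) h s) (at s)" if "s \<in> S" for k s
    using holomorphic_derivI[OF holomorphic_higher_deriv[OF assms(4,1)] assms(1) that] by simp
  have "(deriv ^^ m) (\<lambda>t. G (h t) * deriv h t) t = (\<Sum>\<nu> | partition_on {1..Suc m} \<nu>. faa_di_bruno_term G h \<nu> t)"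
  proof (rule higher_deriv_eq_derivative_chain[OF assms(1,6)])
    fix s show "G (h s) * deriv h s = (\<Sum>\<nu> | partition_on {1..Suc 0} \<nu>. faa_di_bruno_term G h \<nu> s)"
      by (simp add: faa_di_bruno_term_def partitions_of_singleton)
  next
    fix m s assume "s \<in> S"
    have "insert (Suc (Suc m)) {1..Suc m} = {1..Suc (Suc m)}"
      by auto
    then show "((\<lambda>s. \<Sum>\<nu> | partition_on {1..Suc m} \<nu>. faa_di_bruno_term G h \<nu> s) has_field_derivative
        (\<Sum>\<nu> | partition_on {1..Suc (Suc m)} \<nu>. faa_di_bruno_term G h \<nu> s)) (at s)"
      using sum_partition_on_insert[of "{1..Suc m}" "Suc (Suc m)" "\<lambda>\<nu>. faa_di_bruno_term G h \<nu> s"]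
      by (auto intro!: DERIV_sum has_field_derivative_faa_di_bruno_term DG Dh \<open>s \<in> S\<close>)
  qed
  then show ?thesis
    by (simp add: faa_di_bruno_term_def)
qed

section \<open>The cotangent multiplication formula\<close>

lemma
  fixes z :: complex
  shows exp_double_i_eq_1_iff: "exp (2 * \<i> * z) = 1 \<longleftrightarrow> sin z = 0"
    and cot_eq_exp: "sin z \<noteq> 0 \<Longrightarrow> cot z = \<i> - 2 * \<i> / (1 - exp (2 * \<i> * z))"
proof -
  define u where "u = exp (\<i> * z)"
  have "u \<noteq> 0" by (simp add: u_def)
  have exp2: "exp (2 * \<i> * z) = u * u"
    by (simp add: u_def mult.assoc flip: exp_add)
  have sin: "sin z = (u - inverse u) / (2 * \<i>)" and cos: "cos z = (u + inverse u) / 2"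
    by (simp_all add: sin_exp_eq cos_exp_eq u_def exp_minus)
  show "exp (2 * \<i> * z) = 1 \<longleftrightarrow> sin z = 0"
    unfolding exp2 using \<open>u \<noteq> 0\<close> by (auto simp: sin field_simps)
  show "cot z = \<i> - 2 * \<i> / (1 - exp (2 * \<i> * z))" if "sin z \<noteq> 0"
  proof -
    have "u * u \<noteq> 1"
      using that \<open>u \<noteq> 0\<close> by (auto simp: sin field_simps)
    then show ?thesis
      unfolding exp2 using \<open>u \<noteq> 0\<close> by (simp add: cot_def sin cos field_simps)
  qed
qed

lemma sum_inverse_one_minus_roots_of_unity:
  fixes w z :: complex
  assumes "n > 0" and "z ^ n = 1" and "\<And>j. 0 < j \<Longrightarrow> j < n \<Longrightarrow> z ^ j \<noteq> 1"
    and "w ^ n \<noteq> 1"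
  shows "(\<Sum>k<n. 1 / (1 - w * z ^ k)) = of_nat n / (1 - w ^ n)"
proof -
  have swap: "(z ^ k) ^ j = (z ^ j) ^ k" for j k
    by (simp add: mult.commute flip: power_mult)
  have root: "(z ^ k) ^ n = 1" for k
    by (simp add: swap[of k n] assms(2))
  have geometric: "1 / (1 - w * z ^ k) = (\<Sum>j<n. w ^ j * (z ^ j) ^ k) / (1 - w ^ n)" for k
  proof -
    have "(w * z ^ k) ^ n = w ^ n"
      by (simp add: power_mult_distrib root)
    then have "w * z ^ k \<noteq> 1"
      using assms(4) by auto
    then have "1 / (1 - w * z ^ k) = (\<Sum>j<n. (w * z ^ k) ^ j) / (1 - (w * z ^ k) ^ n)"
      using assms(4) \<open>(w * z ^ k) ^ n = w ^ n\<close> by (simp add: sum_gp_strict)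
    then show ?thesis
      by (simp add: power_mult_distrib swap root)
  qed
  have orthogonality: "(\<Sum>k<n. (z ^ j) ^ k) = (if j = 0 then of_nat n else 0)" if "j < n" for j
    using assms(3)[of j] that by (simp add: sum_gp_strict root)
  have "(\<Sum>k<n. 1 / (1 - w * z ^ k)) = (\<Sum>k<n. \<Sum>j<n. w ^ j * (z ^ j) ^ k) / (1 - w ^ n)"
    by (simp add: geometric sum_divide_distrib)
  also have "(\<Sum>k<n. \<Sum>j<n. w ^ j * (z ^ j) ^ k) = (\<Sum>j<n. w ^ j * (\<Sum>k<n. (z ^ j) ^ k))"
    by (subst sum.swap) (simp add: sum_distrib_left)
  also have "\<dots> = (\<Sum>j<n. if j = 0 then of_nat n else 0)"
    by (intro sum.cong) (auto simp: orthogonality)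
  finally show ?thesis
    using assms(1) by simp
qed

lemma primitive_root_of_unity_exp:
  assumes "n > 0"
  shows "exp (2 * \<i> * of_real pi / of_nat n) ^ n = 1"
    and "0 < j \<Longrightarrow> j < n \<Longrightarrow> exp (2 * \<i> * of_real pi / of_nat n) ^ j \<noteq> 1"
proof -
  have pow: "exp (2 * \<i> * of_real pi / of_nat n) ^ j = exp (2 * \<i> * of_real (real j * pi / real n))" for j
    by (simp add: mult_ac flip: exp_of_nat_mult)
  show "exp (2 * \<i> * of_real pi / of_nat n) ^ n = 1"
    using assms by (simp add: pow exp_eq_1)
  assume "0 < j" "j < n"
  show "exp (2 * \<i> * of_real pi / of_nat n) ^ j \<noteq> 1"
  proof
    assume "exp (2 * \<i> * of_real pi / of_nat n) ^ j = 1"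
    then obtain q :: int where "2 * (real j * pi) / real n = 2 * of_int q * pi"
      by (auto simp: pow exp_eq_1)
    then have "real j = real n * of_int q"
      using assms by (simp add: field_simps)
    then have "int j = int n * q"
      by (metis of_int_eq_iff of_int_mult of_int_of_nat_eq)
    then have "n dvd j"
      by (metis dvd_def int_dvd_int_iff)
    then show False
      using \<open>0 < j\<close> \<open>j < n\<close> by (auto dest: dvd_imp_le)
  qed
qed

lemma cot_multiplication_formula:
  fixes x :: complex
  assumes "n > 0" and "sin (of_nat n * x) \<noteq> 0"
  shows "(\<Sum>k<n. cot (x + of_nat k * of_real pi / of_nat n)) = of_nat n * cot (of_nat n * x)"
proof -
  define w where "w = exp (2 * \<i> * x)"
  define z :: complex where "z = exp (2 * \<i> * of_real pi / of_nat n)"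
  have w_pow: "w ^ n = exp (2 * \<i> * (of_nat n * x))"
    by (simp add: w_def mult_ac flip: exp_of_nat_mult)
  have "z ^ n = 1" and "\<And>j. 0 < j \<Longrightarrow> j < n \<Longrightarrow> z ^ j \<noteq> 1"
    unfolding z_def using primitive_root_of_unity_exp[OF assms(1)] by auto
  moreover have "w ^ n \<noteq> 1"
    using assms(2) by (simp add: w_pow exp_double_i_eq_1_iff)
  ultimately have roots: "(\<Sum>k<n. 1 / (1 - w * z ^ k)) = of_nat n / (1 - w ^ n)"
    by (rule sum_inverse_one_minus_roots_of_unity[OF assms(1)])
  have shifted_cot: "cot (x + of_nat k * of_real pi / of_nat n) = \<i> - 2 * \<i> * (1 / (1 - w * z ^ k))" for k
  proof -
    have "exp (2 * \<i> * (x + of_nat k * of_real pi / of_nat n)) = w * z ^ k"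
      by (simp add: w_def z_def distrib_left mult_ac exp_add flip: exp_of_nat_mult)
    moreover have "(z ^ k) ^ n = (z ^ n) ^ k"
      by (simp add: mult.commute flip: power_mult)
    then have "(w * z ^ k) ^ n = w ^ n"
      using \<open>z ^ n = 1\<close> by (simp add: power_mult_distrib)
    then have "w * z ^ k \<noteq> 1"
      using \<open>w ^ n \<noteq> 1\<close> by auto
    ultimately show ?thesis
      by (simp add: cot_eq_exp exp_double_i_eq_1_iff[symmetric])
  qed
  have "(\<Sum>k<n. cot (x + of_nat k * of_real pi / of_nat n))
      = of_nat n * \<i> - 2 * \<i> * (\<Sum>k<n. 1 / (1 - w * z ^ k))"
    by (simp only: shifted_cot sum_subtractf sum_distrib_left[symmetric]) simp
  also have "\<dots> = of_nat n * \<i> - 2 * \<i> * (of_nat n / (1 - w ^ n))"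
    by (simp only: roots)
  also have "\<dots> = of_nat n * cot (of_nat n * x)"
    using assms(2) \<open>w ^ n \<noteq> 1\<close> by (simp add: cot_eq_exp w_pow field_simps)
  finally show ?thesis .
qed

lemma cot_div_one_minus_tan_mult_cot:
  fixes x p :: complex
  assumes "sin x \<noteq> 0" and "cos p \<noteq> 0" and "sin (x - p) \<noteq> 0"
  shows "cot x / (1 - tan p * cot x) = (cos p)\<^sup>2 * cot (x - p) - sin p * cos p"
proof -
  have sin_diff: "sin (x - p) = sin x * cos p - cos x * sin p"
    by (simp add: sin_diff)
  have cos_x: "cos x = cos (x - p) * cos p - sin (x - p) * sin p"
    using cos_add[of "x - p" p] by simp
  have "cot x / (1 - tan p * cot x) = cos p * cos x / sin (x - p)"
    using assms by (simp add: sin_diff cot_def tan_def field_simps)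
  also have "\<dots> = (cos p)\<^sup>2 * cot (x - p) - sin p * cos p"
    using assms(3) by (simp add: cos_x cot_def field_simps power2_eq_square)
  finally show ?thesis .
qed

lemma cos_Arctan_nonzero:
  assumes "1 + z\<^sup>2 \<noteq> 0"
  shows "cos (Arctan z) \<noteq> 0"
proof
  assume "cos (Arctan z) = 0"
  moreover have "z\<^sup>2 \<noteq> -1"
    using assms by (auto simp: add_eq_0_iff)
  ultimately have "z = 0"
    using tan_Arctan[of z] by (simp add: tan_def)
  with \<open>cos (Arctan z) = 0\<close> show False
    by simp
qed

lemma sum_cot_div_one_minus_mult_cot:
  fixes a t :: complex
  assumes "n > 0" and "1 + t\<^sup>2 \<noteq> 0"
    and "\<And>k. k < n \<Longrightarrow> sin ((a + of_nat k * pi) / of_nat n) \<noteq> 0"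
    and "\<And>k. k < n \<Longrightarrow> sin ((a + of_nat k * pi) / of_nat n - Arctan t) \<noteq> 0"
    and "sin (a - of_nat n * Arctan t) \<noteq> 0"
  shows "(\<Sum>k<n. cot ((a + of_nat k * pi) / of_nat n) / (1 - t * cot ((a + of_nat k * pi) / of_nat n)))
       = of_nat n * (cot (a - of_nat n * Arctan t) - t) / (1 + t\<^sup>2)"
proof -
  define \<phi> where "\<phi> = Arctan t"
  have "cos \<phi> \<noteq> 0"
    using cos_Arctan_nonzero[OF assms(2)] by (simp add: \<phi>_def)
  have "t = tan \<phi>"
    using assms(2) by (simp add: \<phi>_def add_eq_0_iff)
  have cos2: "(cos \<phi>)\<^sup>2 = 1 / (1 + t\<^sup>2)" and sin_cos: "sin \<phi> * cos \<phi> = t / (1 + t\<^sup>2)"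
    using \<open>cos \<phi> \<noteq> 0\<close> sin_cos_squared_add[of \<phi>]
    by (simp_all add: \<open>t = tan \<phi>\<close> tan_def field_simps power2_eq_square)
  define x where "x = (a - of_nat n * \<phi>) / of_nat n"
  have shift: "(a + of_nat k * pi) / of_nat n - \<phi> = x + of_nat k * of_real pi / of_nat n" for k
    using assms(1) by (simp add: x_def field_simps)
  have "cot ((a + of_nat k * pi) / of_nat n) / (1 - t * cot ((a + of_nat k * pi) / of_nat n))
      = (cos \<phi>)\<^sup>2 * cot (x + of_nat k * of_real pi / of_nat n) - sin \<phi> * cos \<phi>" if "k < n" for k
    unfolding \<open>t = tan \<phi>\<close> shift[symmetric]
    using assms(3)[OF that] \<open>cos \<phi> \<noteq> 0\<close> assms(4)[OF that] unfolding \<phi>_def by (rule cot_div_one_minus_tan_mult_cot)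
  then have "(\<Sum>k<n. cot ((a + of_nat k * pi) / of_nat n) / (1 - t * cot ((a + of_nat k * pi) / of_nat n)))
      = (cos \<phi>)\<^sup>2 * (\<Sum>k<n. cot (x + of_nat k * of_real pi / of_nat n)) - of_nat n * (sin \<phi> * cos \<phi>)"
    by (simp add: sum_subtractf sum_distrib_left)
  also have "(\<Sum>k<n. cot (x + of_nat k * of_real pi / of_nat n)) = of_nat n * cot (a - of_nat n * \<phi>)"
    using cot_multiplication_formula[OF assms(1), of x] assms(1,5) by (simp add: x_def \<phi>_def)
  finally show ?thesis
    unfolding \<phi>_def[symmetric] cos2 sin_cos by (simp add: right_diff_distrib diff_divide_distrib mult_ac)
qed

section \<open>Power sums of cotangents\<close>

lemma eventually_nhds_nonzero:
  fixes f :: "'a::t2_space \<Rightarrow> 'b::t1_space"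
  assumes "isCont f x" and "f x \<noteq> c"
  shows "\<forall>\<^sub>F y in nhds x. f y \<noteq> c"
proof -
  have "(f \<longlongrightarrow> f x) (nhds x)"
    using assms(1) by (simp add: isCont_def tendsto_at_iff_tendsto_nhds)
  then show ?thesis
    using assms(2) by (rule tendsto_imp_eventually_ne)
qed

lemma shifted_Arctan_neighbourhood:
  fixes a :: complex
  assumes "sin a \<noteq> 0" and "\<And>k. k < n \<Longrightarrow> sin ((a + of_nat k * pi) / of_nat n) \<noteq> 0"
  obtains U where "open U" and "0 \<in> U" and "U \<subseteq> ball 0 1"
    and "\<And>t. t \<in> U \<Longrightarrow> sin (a - of_nat n * Arctan t) \<noteq> 0"
    and "\<And>t k. t \<in> U \<Longrightarrow> k < n \<Longrightarrow> sin ((a + of_nat k * pi) / of_nat n - Arctan t) \<noteq> 0"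
proof -
  have "isCont Arctan 0"
    by (simp add: continuous_at_Arctan)
  then have "\<forall>\<^sub>F t in nhds 0. t \<in> ball 0 1 \<and> sin (a - of_nat n * Arctan t) \<noteq> 0
      \<and> (\<forall>k\<in>{..<n}. sin ((a + of_nat k * pi) / of_nat n - Arctan t) \<noteq> 0)"
    using assms
    by (intro eventually_conj eventually_in_unit_ball eventually_ball_finite ballI eventually_nhds_nonzero)
       (auto intro!: continuous_intros)
  then obtain U where "open U" "0 \<in> U" and U: "\<forall>t\<in>U. t \<in> ball 0 1 \<and> sin (a - of_nat n * Arctan t) \<noteq> 0
      \<and> (\<forall>k\<in>{..<n}. sin ((a + of_nat k * pi) / of_nat n - Arctan t) \<noteq> 0)"
    unfolding eventually_nhds by blast
  then show ?thesis
    by (intro that[of U]) auto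
qed

lemma deriv_shifted_Arctan:
  fixes t :: complex
  assumes "t \<in> ball 0 1"
  shows "deriv (\<lambda>t. a - of_nat n * Arctan t) t = - of_nat n / (1 + t\<^sup>2)"
  using abs_Im_less_one_in_unit_ball[OF assms]
  by (intro DERIV_imp_deriv) (auto intro!: derivative_eq_intros simp: divide_inverse)

lemma power_sum_cot_eq_faa_di_bruno:
  fixes a :: complex
  assumes "n > 0" and "sin a \<noteq> 0" and "\<And>k. k < n \<Longrightarrow> sin ((a + of_nat k * pi) / of_nat n) \<noteq> 0"
  shows "fact j * (\<Sum>k<n. cot ((a + of_nat k * pi) / of_nat n) ^ Suc j)
    = (\<Sum>\<nu> | partition_on {1..Suc j} \<nu>. (deriv ^^ (card \<nu> - 1)) (\<lambda>y. - cot y) a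
          * (\<Prod>B\<in>\<nu>. (deriv ^^ card B) (\<lambda>t. a - of_nat n * Arctan t) 0))
      - of_nat n * (deriv ^^ j) (\<lambda>t. t / (1 + t\<^sup>2)) 0"
proof -
  define c where "c k = cot ((a + of_nat k * pi) / of_nat n)" for k
  define h where "h t = a - of_nat n * Arctan t" for t
  define G where "G y = - cot y" for y :: complex
  define T where "T = {y :: complex. sin y \<noteq> 0}"
  obtain U where "open U" "0 \<in> U" "U \<subseteq> ball 0 1" and sin_h: "\<And>t. t \<in> U \<Longrightarrow> sin (h t) \<noteq> 0"
    and sin_shifted: "\<And>t k. t \<in> U \<Longrightarrow> k < n \<Longrightarrow> sin ((a + of_nat k * pi) / of_nat n - Arctan t) \<noteq> 0"
    using shifted_Arctan_neighbourhood[OF assms(2,3)] unfolding h_def by blast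
  have "open T" and hol_G: "G holomorphic_on T"
    unfolding G_def T_def cot_def by (auto intro!: open_Collect_neq continuous_intros holomorphic_intros)
  have hol_h: "h holomorphic_on U"
    unfolding h_def using \<open>U \<subseteq> ball 0 1\<close>
    by (intro holomorphic_intros holomorphic_on_subset[OF Arctan_holomorphic_on_unit_ball])
  have "h ` U \<subseteq> T"
    using sin_h by (auto simp: T_def)
  have "fact j * (\<Sum>k<n. c k ^ Suc j) = (deriv ^^ j) (\<lambda>t. \<Sum>k<n. c k / (1 - t * c k)) 0"
    by (simp add: higher_deriv_sum_simple_fractions_at_0)
  also have "\<dots> = (deriv ^^ j) (\<lambda>t. G (h t) * deriv h t - of_nat n * (t / (1 + t\<^sup>2))) 0"
  proof (rule higher_deriv_cong_ev[OF eventually_mono[OF eventually_nhds_in_open[OF \<open>open U\<close> \<open>0 \<in> U\<close>]] refl])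
    fix t assume "t \<in> U"
    then have "t \<in> ball 0 1"
      using \<open>U \<subseteq> ball 0 1\<close> by blast
    with \<open>t \<in> U\<close> show "(\<Sum>k<n. c k / (1 - t * c k)) = G (h t) * deriv h t - of_nat n * (t / (1 + t\<^sup>2))"
      using sum_cot_div_one_minus_mult_cot[OF assms(1) one_plus_square_nonzero_in_unit_ball[OF \<open>t \<in> ball 0 1\<close>]
          assms(3) sin_shifted[OF \<open>t \<in> U\<close>] sin_h[OF \<open>t \<in> U\<close>, unfolded h_def]]
      by (simp add: c_def G_def h_def[abs_def] deriv_shifted_Arctan diff_divide_distrib right_diff_distrib)
  qed
  also have "\<dots> = (deriv ^^ j) (\<lambda>t. G (h t) * deriv h t) 0 - of_nat n * (deriv ^^ j) (\<lambda>t. t / (1 + t\<^sup>2)) 0"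
  proof -
    have "(\<lambda>t. t / (1 + t\<^sup>2)) holomorphic_on U"
      using \<open>U \<subseteq> ball 0 1\<close> one_plus_square_nonzero_in_unit_ball by (intro holomorphic_intros) auto
    moreover have "(\<lambda>t. G (h t) * deriv h t) holomorphic_on U"
      using holomorphic_on_compose_gen[OF hol_h hol_G \<open>h ` U \<subseteq> T\<close>] holomorphic_deriv[OF hol_h \<open>open U\<close>]
      by (intro holomorphic_intros) (auto simp: o_def hol_h \<open>open U\<close>)
    ultimately show ?thesis
      using \<open>open U\<close> \<open>0 \<in> U\<close>
      by (simp only: higher_deriv_diff[of _ U] higher_deriv_cmult[of _ U] holomorphic_on_mult holomorphic_on_const)
  qed
  also have "(deriv ^^ j) (\<lambda>t. G (h t) * deriv h t) 0
      = (\<Sum>\<nu> | partition_on {1..Suc j} \<nu>. (deriv ^^ (card \<nu> - 1)) G (h 0) * (\<Prod>B\<in>\<nu>. (deriv ^^ card B) h 0))"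
    by (rule faa_di_bruno_partitions[OF \<open>open U\<close> \<open>open T\<close> hol_G hol_h \<open>h ` U \<subseteq> T\<close> \<open>0 \<in> U\<close>])
  finally show ?thesis
    by (simp add: c_def G_def[abs_def] h_def[abs_def])
qed

(* For odd b, (-i)^b i = (-1)^((b-1)/2): this is where the powers of i in the formula come from. *)
lemma odd_block_factor:
  assumes "odd b"
  shows "- of_nat n * fact (b - 1) * (if even (b - 1) then (-1) ^ ((b - 1) div 2) else 0)
       = (-1) * ((-\<i>) ^ b * (\<i> * of_nat n) * of_int ((-1) ^ (b - 1) * fact (b - 1)) :: complex)"
proof -
  obtain q where b: "b = Suc (2 * q)"
    using assms by (metis oddE Suc_eq_plus1)
  have "(-\<i>) ^ (2 * q) = (-1::complex) ^ q"
    by (simp only: power_mult) simp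
  then have "(-\<i>) ^ Suc (2 * q) * \<i> = (-1::complex) ^ q"
    by (simp only: power_Suc) (simp add: mult.commute[of _ \<i>] mult.assoc)
  moreover have "(-1::complex) ^ (2 * q) = 1"
    by (simp only: power_mult) simp
  ultimately show ?thesis
    by (simp add: b of_int_fact) (simp add: mult_ac)
qed

lemma prod_block_factors_eq_mobius:
  assumes "partition_on {1..m} \<nu>"
  shows "(\<Prod>B\<in>\<nu>. - of_nat n * fact (card B - 1) * (if even (card B - 1) then (-1) ^ ((card B - 1) div 2) else 0))
    = (if \<nu> \<in> odd_partitions m
       then (-1) ^ card \<nu> * (-\<i>) ^ m * (\<i> * of_nat n) ^ card \<nu> * of_int (mobius_part \<nu>) else (0::complex))"
proof -
  have "finite \<nu>"
    using finite_elements[OF _ assms] by simp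
  have card_pos: "card B > 0" if "B \<in> \<nu>" for B
    using partition_on_block(1,2)[OF assms that] finite_subset[of B "{1..m}"] by (auto simp: card_gt_0_iff)
  show ?thesis
  proof (cases "\<nu> \<in> odd_partitions m")
    case True
    then have "(\<Prod>B\<in>\<nu>. - of_nat n * fact (card B - 1) * (if even (card B - 1) then (-1) ^ ((card B - 1) div 2) else 0))
        = (\<Prod>B\<in>\<nu>. (-1) * ((-\<i>) ^ card B * (\<i> * of_nat n) * of_int ((-1) ^ (card B - 1) * fact (card B - 1))))"
      by (intro prod.cong refl odd_block_factor) (auto simp: odd_partitions_def)
    also have "\<dots> = (-1) ^ card \<nu> * (-\<i>) ^ (\<Sum>B\<in>\<nu>. card B) * (\<i> * of_nat n) ^ card \<nu> * of_int (mobius_part \<nu>)"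
      by (simp only: prod.distrib prod_constant power_sum mobius_part_def of_int_prod)
         (simp add: prod.distrib power_mult_distrib mult_ac)
    finally show ?thesis
      using True sum_card_partition_on[OF _ assms] by simp
  next
    case False
    then obtain B where "B \<in> \<nu>" "even (card B)"
      using assms by (auto simp: odd_partitions_def)
    then have "odd (card B - 1)"
      using card_pos by simp
    then have "\<exists>B\<in>\<nu>. - of_nat n * fact (card B - 1) * (if even (card B - 1) then (-1) ^ ((card B - 1) div 2) else 0) = (0::complex)"
      by (intro bexI[OF _ \<open>B \<in> \<nu>\<close>]) simp
    then show ?thesis
      unfolding if_not_P[OF False] by (rule prod_zero[OF \<open>finite \<nu>\<close>])
  qed
qed

lemma prod_higher_deriv_shifted_Arctan:
  assumes "partition_on {1..m} \<nu>"
  shows "(\<Prod>B\<in>\<nu>. (deriv ^^ card B) (\<lambda>t. a - of_nat n * Arctan t) 0)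
       = (if \<nu> \<in> odd_partitions m
          then (-1) ^ card \<nu> * ((-\<i>) ^ m * (\<i> * of_nat n) ^ card \<nu> * of_int (mobius_part \<nu>)) else 0)"
proof -
  have "(deriv ^^ card B) (\<lambda>t. a - of_nat n * Arctan t) 0
      = - of_nat n * fact (card B - 1) * (if even (card B - 1) then (-1) ^ ((card B - 1) div 2) else 0)"
    if "B \<in> \<nu>" for B
  proof -
    have "Suc (card B - 1) = card B"
      using partition_on_block(1,2)[OF assms that] finite_subset[of B "{1..m}"]
      by (simp add: card_gt_0_iff)
    then show ?thesis
      using higher_deriv_shifted_Arctan_at_0[of "card B - 1" a n] by simp
  qed
  then have "(\<Prod>B\<in>\<nu>. (deriv ^^ card B) (\<lambda>t. a - of_nat n * Arctan t) 0)
      = (\<Prod>B\<in>\<nu>. - of_nat n * fact (card B - 1) * (if even (card B - 1) then (-1) ^ ((card B - 1) div 2) else 0))"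
    by (rule prod.cong[OF refl])
  also have "\<dots> = (if \<nu> \<in> odd_partitions m
         then (-1) ^ card \<nu> * (-\<i>) ^ m * (\<i> * of_nat n) ^ card \<nu> * of_int (mobius_part \<nu>) else 0)"
    by (rule prod_block_factors_eq_mobius[OF assms])
  finally show ?thesis
    by (simp only: mult.assoc)
qed

lemma faa_di_bruno_term_cot_Arctan:
  fixes a :: complex
  assumes "partition_on {1..m} \<nu>" and "m \<ge> 1" and "sin a \<noteq> 0"
  shows "(deriv ^^ (card \<nu> - 1)) (\<lambda>y. - cot y) a
           * (\<Prod>B\<in>\<nu>. (deriv ^^ card B) (\<lambda>t. a - of_nat n * Arctan t) 0)
       = (if \<nu> \<in> odd_partitions m
          then (-\<i>) ^ m * (poly (map_poly of_real (deriv_poly (card \<nu> - 1))) (cot a)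
                 * (\<i> * of_nat n) ^ card \<nu> * of_int (mobius_part \<nu>))
          else 0)"
proof -
  have "finite \<nu>"
    using finite_elements[OF _ assms(1)] by simp
  moreover have "\<nu> \<noteq> {}"
    using assms(1,2) by (auto simp: partition_on_def)
  ultimately have "card \<nu> > 0"
    by (simp add: card_gt_0_iff)
  have sign: "- ((-1::complex) ^ (card \<nu> - 1) * P) * ((-1) ^ card \<nu> * Z) = P * Z" for P Z
  proof -
    have "- ((-1::complex) ^ (card \<nu> - 1) * P) * ((-1) ^ card \<nu> * Z)
        = - ((-1) ^ (card \<nu> - 1) * (-1) ^ card \<nu>) * (P * Z)"
      by (simp add: algebra_simps)
    also have "(-1::complex) ^ (card \<nu> - 1) * (-1) ^ card \<nu> = -1"
      using \<open>card \<nu> > 0\<close> by (cases "card \<nu>") simp_all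
    finally show ?thesis
      by simp
  qed
  show ?thesis
  proof (cases "\<nu> \<in> odd_partitions m")
    case True
    show ?thesis
      unfolding higher_deriv_neg_cot[OF assms(3)] prod_higher_deriv_shifted_Arctan[OF assms(1)] if_P[OF True]
      by (rule sign[THEN trans]) (simp add: mult_ac)
  qed (simp add: prod_higher_deriv_shifted_Arctan[OF assms(1)])
qed

theorem sum_cot_power_complex:
  fixes a :: complex
  assumes "m \<ge> 1" and "n > 0" and "sin a \<noteq> 0"
    and "\<And>k. k < n \<Longrightarrow> sin ((a + of_nat k * pi) / of_nat n) \<noteq> 0"
  shows "(\<Sum>k<n. cot ((a + of_nat k * pi) / of_nat n) ^ m)
    = (-1) ^ (m div 2) * of_nat n * (if even m then 1 else 0)
      + ((-\<i>) ^ m / fact (m - 1)) *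
        (\<Sum>\<nu>\<in>odd_partitions m. poly (map_poly of_real (deriv_poly (card \<nu> - 1))) (cot a)
           * (\<i> * of_nat n) ^ card \<nu> * of_int (mobius_part \<nu>))"
proof -
  obtain j where m: "m = Suc j"
    using assms(1) by (cases m) auto
  define X where "X \<nu> = poly (map_poly of_real (deriv_poly (card \<nu> - 1))) (cot a)
      * (\<i> * of_nat n) ^ card \<nu> * of_int (mobius_part \<nu>)" for \<nu>
  have partitions_finite: "finite {\<nu>. partition_on {1..m} \<nu>}"
    by (simp add: finitely_many_partition_on)
  have "(\<Sum>\<nu> | partition_on {1..m} \<nu>. (deriv ^^ (card \<nu> - 1)) (\<lambda>y. - cot y) a
          * (\<Prod>B\<in>\<nu>. (deriv ^^ card B) (\<lambda>t. a - of_nat n * Arctan t) 0))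
      = (\<Sum>\<nu> | partition_on {1..m} \<nu>. if \<nu> \<in> odd_partitions m then (-\<i>) ^ m * X \<nu> else 0)"
    unfolding X_def
    by (intro sum.cong refl, rule faa_di_bruno_term_cot_Arctan[OF _ assms(1,3)]) simp
  also have "\<dots> = (\<Sum>\<nu>\<in>{\<nu> \<in> {\<nu>. partition_on {1..m} \<nu>}. \<nu> \<in> odd_partitions m}. (-\<i>) ^ m * X \<nu>)"
    by (rule sum.inter_filter[OF partitions_finite, symmetric])
  also have "{\<nu> \<in> {\<nu>. partition_on {1..m} \<nu>}. \<nu> \<in> odd_partitions m} = odd_partitions m"
    by (auto simp: odd_partitions_def)
  finally have "fact j * (\<Sum>k<n. cot ((a + of_nat k * pi) / of_nat n) ^ m)
      = (-\<i>) ^ m * (\<Sum>\<nu>\<in>odd_partitions m. X \<nu>)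
        + fact j * (- of_nat n * (if odd j then (-1) ^ (j div 2) else 0))"
    using power_sum_cot_eq_faa_di_bruno[OF assms(2-4), of j]
    by (simp add: m higher_deriv_div_one_plus_square_at_0 sum_distrib_left)
  also have "- of_nat n * (if odd j then (-1) ^ (j div 2) else 0)
      = (-1) ^ (m div 2) * of_nat n * (if even m then 1 else (0::complex))"
    by (cases "odd j") (auto simp: m elim!: oddE)
  finally show ?thesis
    unfolding X_def[symmetric] m diff_Suc_1 by (simp add: field_simps)
qed

lemma sin_shifted_complex_nonzero:
  fixes \<alpha> :: real
  assumes "n > 0" and "\<forall>j::int. \<alpha> \<noteq> of_int j * pi"
  shows "sin ((complex_of_real \<alpha> + of_nat k * pi) / of_nat n) \<noteq> 0"
proof -
  have "(complex_of_real \<alpha> + of_nat k * pi) / of_nat n = complex_of_real ((\<alpha> + real k * pi) / real n)"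
    by simp
  moreover have "sin ((\<alpha> + real k * pi) / real n) \<noteq> 0"
  proof
    assume "sin ((\<alpha> + real k * pi) / real n) = 0"
    then obtain i :: int where "(\<alpha> + real k * pi) / real n = of_int i * pi"
      by (auto simp: sin_zero_iff_int2)
    then have "\<alpha> = of_int (int n * i - int k) * pi"
      using assms(1) by (simp add: field_simps)
    then show False
      using assms(2) by blast
  qed
  ultimately show ?thesis
    by (simp only: sin_of_real of_real_eq_0_iff not_False_eq_True)
qed

theorem theorem6p1:
  fixes m n :: nat and \<alpha> :: real
  assumes "m \<ge> 1" and "n \<ge> 2" and "\<forall>j::int. \<alpha> \<noteq> of_int j * pi"
  shows "complex_of_real (\<Sum>k<n. cot ((\<alpha> + real k * pi) / real n) ^ m)
    = complex_of_real ((-1) ^ (m div 2) * real n * (if even m then 1 else 0))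
      + ((- \<i>) ^ m / of_nat (fact (m - 1))) *
        (\<Sum>\<nu>\<in>odd_partitions m.
           complex_of_real (poly (deriv_poly (card \<nu> - 1)) (cot \<alpha>))
           * (\<i> * of_nat n) ^ card \<nu> * of_int (mobius_part \<nu>))"
proof -
  have sin_nonzero: "sin ((complex_of_real \<alpha> + of_nat k * pi) / of_nat n) \<noteq> 0" for k
    using assms(2,3) by (intro sin_shifted_complex_nonzero) auto
  have "sin (complex_of_real \<alpha>) \<noteq> 0"
    using sin_shifted_complex_nonzero[of 1 \<alpha> 0] assms(3) by simp
  then have complex_formula: "(\<Sum>k<n. cot ((complex_of_real \<alpha> + of_nat k * pi) / of_nat n) ^ m)
    = (-1) ^ (m div 2) * of_nat n * (if even m then 1 else 0)
      + ((-\<i>) ^ m / fact (m - 1)) *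
        (\<Sum>\<nu>\<in>odd_partitions m. poly (map_poly of_real (deriv_poly (card \<nu> - 1))) (cot (complex_of_real \<alpha>))
           * (\<i> * of_nat n) ^ card \<nu> * of_int (mobius_part \<nu>))"
    using assms(1,2) sin_nonzero by (intro sum_cot_power_complex) auto
  have lhs: "complex_of_real (\<Sum>k<n. cot ((\<alpha> + real k * pi) / real n) ^ m)
      = (\<Sum>k<n. cot ((complex_of_real \<alpha> + of_nat k * pi) / of_nat n) ^ m)"
    by (simp add: cot_of_real)
  have "poly (map_poly of_real p) (cot (complex_of_real \<alpha>)) = complex_of_real (poly p (cot \<alpha>))" for p
    by (simp add: poly_map_poly_of_real flip: cot_of_real)
  then show ?thesis
    unfolding lhs complex_formula by (simp add: of_nat_fact)
qed

end
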